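(* Let $R$ be a Noetherian ring, $I$ an ideal of $R$, and $M$ a finitely generated $R$-module. Let $J=(x_1,\ldots,x_s)\subseteq I$ be a reduction of $I$ relative to $M$, and fix an integer $\ell \geq \mathrm{r}_J(I,M)$ such that $$[(x_1,\ldots,x_{i-1})M :_M x_i]\cap I^{\ell+1}M = (x_1,\ldots,x_{i-1})I^{\ell}M \quad \text{for } i=1,\ldots,s.$$ Then for all $n\geq \ell+1$, $$[(x_1,\ldots,x_{i-1})M :_M x_i]\cap I^{n}M = (x_1,\ldots,x_{i-1})I^{n-1}M \quad \text{for } i=1,\ldots,s.$$
   Context: For $i=1$ the ideal $(x_1,\ldots,x_{i-1})$ is the zero ideal. An ideal $J\subseteq I$ is a reduction of $I$ relative to $M$ if $JI^nM=I^{n+1}M$ for some $n\geq 0$; then $\mathrm{r}_J(I,M)=\min\{m\in\mathbb N: JI^mM=I^{m+1}M\}$. *)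

theory Defs
  imports Main "HOL.Modules"
begin

definition is_ideal :: "'a::comm_ring_1 set \<Rightarrow> bool" where
  "is_ideal I \<longleftrightarrow> module.subspace ((*) :: 'a \<Rightarrow> 'a \<Rightarrow> 'a) I"

definition ideal_gen :: "'a::comm_ring_1 set \<Rightarrow> 'a set" where
  "ideal_gen S = module.span ((*) :: 'a \<Rightarrow> 'a \<Rightarrow> 'a) S"

definition noetherian_ring :: "'a::comm_ring_1 itself \<Rightarrow> bool" where
  "noetherian_ring _ \<longleftrightarrow>
     (\<forall>I :: 'a set. is_ideal I \<longrightarrow> (\<exists>S. finite S \<and> I = ideal_gen S))"

definition ideal_prod :: "'a::comm_ring_1 set \<Rightarrow> 'a set \<Rightarrow> 'a set" where
  "ideal_prod I K = ideal_gen {a * b | a b. a \<in> I \<and> b \<in> K}"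

fun ideal_pow :: "'a::comm_ring_1 set \<Rightarrow> nat \<Rightarrow> 'a set" where
  "ideal_pow I 0 = UNIV"
| "ideal_pow I (Suc n) = ideal_prod I (ideal_pow I n)"

text \<open>The module M is the whole type 'b with scalar multiplication sc.
  Finitely generated: spanned by a finite set.\<close>
definition fin_gen_module :: "('a::comm_ring_1 \<Rightarrow> 'b::ab_group_add \<Rightarrow> 'b) \<Rightarrow> bool" where
  "fin_gen_module sc \<longleftrightarrow> (\<exists>S. finite S \<and> module.span sc S = UNIV)"

definition ideal_smult :: "('a::comm_ring_1 \<Rightarrow> 'b::ab_group_add \<Rightarrow> 'b) \<Rightarrow> 'a set \<Rightarrow> 'b set \<Rightarrow> 'b set" where
  "ideal_smult sc I N = module.span sc {sc a m | a m. a \<in> I \<and> m \<in> N}"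

definition mod_colon :: "('a::comm_ring_1 \<Rightarrow> 'b::ab_group_add \<Rightarrow> 'b) \<Rightarrow> 'b set \<Rightarrow> 'a \<Rightarrow> 'b set" where
  "mod_colon sc N y = {m. sc y m \<in> N}"

definition is_reduction :: "('a::comm_ring_1 \<Rightarrow> 'b::ab_group_add \<Rightarrow> 'b) \<Rightarrow> 'a set \<Rightarrow> 'a set \<Rightarrow> bool" where
  "is_reduction sc J I \<longleftrightarrow> J \<subseteq> I \<and>
     (\<exists>n. ideal_smult sc J (ideal_smult sc (ideal_pow I n) UNIV) = ideal_smult sc (ideal_pow I (Suc n)) UNIV)"

definition reduction_number :: "('a::comm_ring_1 \<Rightarrow> 'b::ab_group_add \<Rightarrow> 'b) \<Rightarrow> 'a set \<Rightarrow> 'a set \<Rightarrow> nat" where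
  "reduction_number sc J I = (LEAST m. ideal_smult sc J (ideal_smult sc (ideal_pow I m) UNIV) = ideal_smult sc (ideal_pow I (Suc m)) UNIV)"

end

theory Submission
  imports Defs
begin

text \<open>Induction on \<open>n\<close>, using that \<open>J I\<^sup>n M = I\<^sup>n\<^sup>+\<^sup>1 M\<close> for every \<open>n \<ge> r\<^sub>J(I,M)\<close>.
  Given the colon equalities at \<open>n\<close>, a descending induction on \<open>j\<close> shows
  \<open>J\<^sub>j M \<inter> I\<^sup>n\<^sup>+\<^sup>1 M \<subseteq> J\<^sub>j I\<^sup>n M\<close> for \<open>J\<^sub>j = (x\<^sub>1,\<dots>,x\<^sub>j)\<close>: an element of
  \<open>J\<^sub>j\<^sub>+\<^sub>1 I\<^sup>n M\<close> has the form \<open>u + x\<^sub>j\<^sub>+\<^sub>1 v\<close> with \<open>u \<in> J\<^sub>j I\<^sup>n M\<close> and \<open>v \<in> I\<^sup>n M\<close>;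
  if it lies in \<open>J\<^sub>j M\<close>, then \<open>v \<in> (J\<^sub>j M :\<^sub>M x\<^sub>j\<^sub>+\<^sub>1) \<inter> I\<^sup>n M = J\<^sub>j I\<^sup>n\<^sup>-\<^sup>1 M\<close>, so
  \<open>x\<^sub>j\<^sub>+\<^sub>1 v \<in> J\<^sub>j I\<^sup>n M\<close>. The colon equality at \<open>n + 1\<close> follows because its left side is
  contained in the left side at \<open>n\<close>, hence in \<open>J\<^sub>i M\<close>.\<close>

interpretation ring_module: module "(*) :: 'a::comm_ring_1 \<Rightarrow> 'a \<Rightarrow> 'a"
  by unfold_locales (auto simp: algebra_simps)

text \<open>With \<open>x\<close> indexed from \<open>0\<close>, the paper's \<open>(x\<^sub>1,\<dots>,x\<^sub>i)\<close> is \<open>initial_ideal x i\<close>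
  and its \<open>x\<^sub>i\<^sub>+\<^sub>1\<close> is \<open>x i\<close>.\<close>
abbreviation initial_ideal :: "(nat \<Rightarrow> 'a::comm_ring_1) \<Rightarrow> nat \<Rightarrow> 'a set" where
  "initial_ideal x i \<equiv> ideal_gen (x ` {..<i})"

lemma initial_ideal_mono: "i \<le> j \<Longrightarrow> initial_ideal x i \<subseteq> initial_ideal x j"
  unfolding ideal_gen_def by (rule ring_module.span_mono) auto

lemma initial_ideal_Suc: "initial_ideal x (Suc i) = ideal_gen (insert (x i) (x ` {..<i}))"
  by (simp add: lessThan_Suc)

context module
begin

abbreviation power_submodule :: "'a set \<Rightarrow> nat \<Rightarrow> 'b set" where
  "power_submodule I n \<equiv> ideal_smult scale (ideal_pow I n) UNIV"

lemma subspace_ideal_smult [simp]: "subspace (ideal_smult scale A N)"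
  by (simp add: ideal_smult_def)

lemma ideal_smult_mono: "A \<subseteq> A' \<Longrightarrow> N \<subseteq> N' \<Longrightarrow> ideal_smult scale A N \<subseteq> ideal_smult scale A' N'"
  unfolding ideal_smult_def by (intro span_mono) blast

lemma ideal_smult_subset: "subspace N \<Longrightarrow> ideal_smult scale A N \<subseteq> N"
  unfolding ideal_smult_def by (rule span_minimal) (auto intro: subspace_scale)

lemma scale_mem_ideal_smult: "a \<in> A \<Longrightarrow> v \<in> N \<Longrightarrow> a *s v \<in> ideal_smult scale A N"
  unfolding ideal_smult_def by (auto intro: span_base)

lemma scale_mem_span:
  assumes "\<And>v. v \<in> S \<Longrightarrow> c *s v \<in> span T" and "v \<in> span S"
  shows "c *s v \<in> span T"
  using assms(2)
proof (induction rule: span_induct_alt)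
  case (step d v w)
  have "c *s v \<in> span T" using assms(1) step.hyps .
  then have "d *s (c *s v) + c *s w \<in> span T" using step.IH by (rule span_add[OF span_scale])
  then show ?case by (simp only: scale_right_distrib scale_left_commute[of c d])
qed (simp add: span_zero)

lemma ideal_smult_ideal_gen:
  assumes "subspace N"
  shows "ideal_smult scale (ideal_gen S) N = ideal_smult scale S N"
proof
  have "a *s v \<in> ideal_smult scale S N" if "a \<in> ring_module.span S" "v \<in> N" for a v
    using that
  proof (induction arbitrary: v rule: ring_module.span_induct_alt)
    case (step c s a)
    have "c *s v \<in> N" using assms step.prems by (rule subspace_scale)
    then have "s *s (c *s v) \<in> ideal_smult scale S N"
      using step.hyps by (rule scale_mem_ideal_smult[rotated])
    then have "s *s (c *s v) + a *s v \<in> ideal_smult scale S N"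
      using step.IH[OF step.prems] by (rule subspace_add[OF subspace_ideal_smult])
    moreover have "(c * s + a) *s v = s *s (c *s v) + a *s v"
      by (simp add: scale_left_distrib mult.commute[of c s])
    ultimately show ?case by (simp only:)
  qed (simp add: subspace_0)
  then show "ideal_smult scale (ideal_gen S) N \<subseteq> ideal_smult scale S N"
    unfolding ideal_gen_def ideal_smult_def[of _ "ring_module.span S"]
    by (intro span_minimal) auto
  have "S \<subseteq> ideal_gen S" unfolding ideal_gen_def by (rule ring_module.span_superset)
  then show "ideal_smult scale S N \<subseteq> ideal_smult scale (ideal_gen S) N"
    by (rule ideal_smult_mono) simp
qed

lemma ideal_smult_ideal_smult:
  "ideal_smult scale A (ideal_smult scale B N) = span {(a * b) *s m | a b m. a \<in> A \<and> b \<in> B \<and> m \<in> N}"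
  (is "_ = span ?G")
proof
  have "a *s n \<in> span ?G" if "a \<in> A" "n \<in> ideal_smult scale B N" for a n
    using that(2) unfolding ideal_smult_def
  proof (rule scale_mem_span[rotated])
    fix v assume "v \<in> {b *s m |b m. b \<in> B \<and> m \<in> N}"
    then obtain b m where "v = b *s m" "b \<in> B" "m \<in> N" by blast
    then have "a *s v \<in> ?G" using \<open>a \<in> A\<close> by auto
    then show "a *s v \<in> span ?G" by (rule span_base)
  qed
  then show "ideal_smult scale A (ideal_smult scale B N) \<subseteq> span ?G"
    unfolding ideal_smult_def[of _ A] by (intro span_minimal) auto
  have "(a * b) *s m \<in> ideal_smult scale A (ideal_smult scale B N)"
    if "a \<in> A" "b \<in> B" "m \<in> N" for a b m
    using scale_mem_ideal_smult[OF that(1) scale_mem_ideal_smult[OF that(2,3)]] by simp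
  then show "span ?G \<subseteq> ideal_smult scale A (ideal_smult scale B N)"
    by (intro span_minimal subspace_ideal_smult) blast
qed

lemma ideal_smult_commute:
  "ideal_smult scale A (ideal_smult scale B N) = ideal_smult scale B (ideal_smult scale A N)"
proof -
  have "{(a * b) *s m | a b m. a \<in> A \<and> b \<in> B \<and> m \<in> N}
          = {(b * a) *s m | b a m. b \<in> B \<and> a \<in> A \<and> m \<in> N}"
    by (auto; metis mult.commute)
  then show ?thesis by (simp only: ideal_smult_ideal_smult)
qed

lemma ideal_smult_ideal_prod:
  assumes "subspace N"
  shows "ideal_smult scale (ideal_prod A B) N = ideal_smult scale A (ideal_smult scale B N)"
proof -
  have "ideal_smult scale (ideal_prod A B) N = ideal_smult scale {a * b |a b. a \<in> A \<and> b \<in> B} N"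
    unfolding ideal_prod_def using assms by (rule ideal_smult_ideal_gen)
  also have "\<dots> = span {(a * b) *s m | a b m. a \<in> A \<and> b \<in> B \<and> m \<in> N}"
    unfolding ideal_smult_def by (rule arg_cong[where f = span]) blast
  finally show ?thesis by (simp only: ideal_smult_ideal_smult)
qed

lemma power_submodule_Suc: "power_submodule I (Suc n) = ideal_smult scale I (power_submodule I n)"
  by (simp add: ideal_smult_ideal_prod)

lemma ideal_smult_ideal_gen_insert:
  assumes "subspace N"
  shows "ideal_smult scale (ideal_gen (insert c S)) N
           = {u + c *s v | u v. u \<in> ideal_smult scale (ideal_gen S) N \<and> v \<in> N}"
proof -
  interpret scale_c: module_hom scale scale "\<lambda>v. c *s v"
    by unfold_locales (simp_all add: scale_right_distrib mult.commute)
  have span_image: "span ((\<lambda>v. c *s v) ` N) = (\<lambda>v. c *s v) ` N"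
    using assms by (simp add: scale_c.span_image span_eq_iff[THEN iffD2])
  have "{s *s m | s m. s \<in> insert c S \<and> m \<in> N}
          = {s *s m | s m. s \<in> S \<and> m \<in> N} \<union> (\<lambda>v. c *s v) ` N"
    by blast
  then have "ideal_smult scale (ideal_gen (insert c S)) N
               = span ({s *s m | s m. s \<in> S \<and> m \<in> N} \<union> (\<lambda>v. c *s v) ` N)"
    by (subst ideal_smult_ideal_gen[OF assms]) (simp only: ideal_smult_def)
  also have "\<dots> = {u + c *s v | u v. u \<in> ideal_smult scale S N \<and> v \<in> N}"
    unfolding span_Un span_image ideal_smult_def by blast
  finally show ?thesis by (simp only: ideal_smult_ideal_gen[OF assms])
qed

lemma power_submodule_Suc_subset: "power_submodule I (Suc n) \<subseteq> power_submodule I n"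
  unfolding power_submodule_Suc by (rule ideal_smult_subset) simp

lemma reduction_equation_Suc:
  assumes "ideal_smult scale J (power_submodule I n) = power_submodule I (Suc n)"
  shows "ideal_smult scale J (power_submodule I (Suc n)) = power_submodule I (Suc (Suc n))"
proof -
  have "ideal_smult scale J (power_submodule I (Suc n))
          = ideal_smult scale I (ideal_smult scale J (power_submodule I n))"
    by (simp only: power_submodule_Suc ideal_smult_commute[of J])
  also have "\<dots> = power_submodule I (Suc (Suc n))"
    by (simp only: assms power_submodule_Suc[of I "Suc n"])
  finally show ?thesis .
qed

lemma reduction_equation_mono:
  assumes "ideal_smult scale J (power_submodule I r) = power_submodule I (Suc r)" and "r \<le> n"
  shows "ideal_smult scale J (power_submodule I n) = power_submodule I (Suc n)"
  using assms(2) by (induction rule: dec_induct) (use assms(1) reduction_equation_Suc in auto)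

lemma reduction_equation_above_reduction_number:
  assumes "is_reduction scale J I" and "reduction_number scale J I \<le> n"
  shows "ideal_smult scale J (power_submodule I n) = power_submodule I (Suc n)"
proof (rule reduction_equation_mono[OF _ assms(2)])
  have "\<exists>r. ideal_smult scale J (power_submodule I r) = power_submodule I (Suc r)"
    using assms(1) by (simp add: is_reduction_def)
  then show "ideal_smult scale J (power_submodule I (reduction_number scale J I))
               = power_submodule I (Suc (reduction_number scale J I))"
    unfolding reduction_number_def by (rule LeastI_ex)
qed

lemma initial_submodule_inter_power_subset:
  assumes "initial_ideal x s \<subseteq> I"
    and reduction: "ideal_smult scale (initial_ideal x s) (power_submodule I (Suc n))
                      = power_submodule I (Suc (Suc n))"
    and colon: "\<forall>i<s. mod_colon scale (ideal_smult scale (initial_ideal x i) UNIV) (x i)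
                         \<inter> power_submodule I (Suc n)
                       = ideal_smult scale (initial_ideal x i) (power_submodule I n)"
    and "j \<le> s"
  shows "ideal_smult scale (initial_ideal x j) UNIV \<inter> power_submodule I (Suc (Suc n))
           \<subseteq> ideal_smult scale (initial_ideal x j) (power_submodule I (Suc n))"
  using \<open>j \<le> s\<close>
proof (induction rule: inc_induct)
  case base
  show ?case using reduction by blast
next
  case (step j)
  let ?Jj = "initial_ideal x j"
  show ?case
  proof
    fix m assume m: "m \<in> ideal_smult scale ?Jj UNIV \<inter> power_submodule I (Suc (Suc n))"
    have "ideal_smult scale ?Jj UNIV \<subseteq> ideal_smult scale (initial_ideal x (Suc j)) UNIV"
      by (intro ideal_smult_mono initial_ideal_mono) auto
    with m step.IH have "m \<in> ideal_smult scale (initial_ideal x (Suc j)) (power_submodule I (Suc n))"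
      by blast
    then obtain u v where u: "u \<in> ideal_smult scale ?Jj (power_submodule I (Suc n))"
      and v: "v \<in> power_submodule I (Suc n)" and m_eq: "m = u + x j *s v"
      unfolding initial_ideal_Suc ideal_smult_ideal_gen_insert[OF subspace_ideal_smult] by blast
    have "u \<in> ideal_smult scale ?Jj UNIV"
      using u ideal_smult_mono[of ?Jj ?Jj] by blast
    with m have "m - u \<in> ideal_smult scale ?Jj UNIV"
      by (intro subspace_diff[OF subspace_ideal_smult]) auto
    with v have "v \<in> mod_colon scale (ideal_smult scale ?Jj UNIV) (x j) \<inter> power_submodule I (Suc n)"
      by (simp add: mod_colon_def m_eq)
    with colon step.hyps have "v \<in> ideal_smult scale ?Jj (power_submodule I n)"
      by auto
    moreover have "x j \<in> I"
      using assms(1) step.hyps ring_module.span_base[of "x j" "x ` {..<s}"]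
      by (auto simp: ideal_gen_def)
    ultimately have "x j *s v \<in> ideal_smult scale I (ideal_smult scale ?Jj (power_submodule I n))"
      by (rule scale_mem_ideal_smult[rotated])
    then have "x j *s v \<in> ideal_smult scale ?Jj (power_submodule I (Suc n))"
      by (simp only: ideal_smult_commute[of I] power_submodule_Suc)
    with u show "m \<in> ideal_smult scale ?Jj (power_submodule I (Suc n))"
      unfolding m_eq by (rule subspace_add[OF subspace_ideal_smult])
  qed
qed

lemma colon_inter_power_submodule_Suc:
  assumes "initial_ideal x s \<subseteq> I"
    and reduction: "ideal_smult scale (initial_ideal x s) (power_submodule I (Suc n))
                      = power_submodule I (Suc (Suc n))"
    and colon: "\<forall>i<s. mod_colon scale (ideal_smult scale (initial_ideal x i) UNIV) (x i)
                         \<inter> power_submodule I (Suc n)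
                       = ideal_smult scale (initial_ideal x i) (power_submodule I n)"
    and "i < s"
  shows "mod_colon scale (ideal_smult scale (initial_ideal x i) UNIV) (x i)
           \<inter> power_submodule I (Suc (Suc n))
         = ideal_smult scale (initial_ideal x i) (power_submodule I (Suc n))"
    (is "?C \<inter> _ = ?R")
proof
  have "?C \<inter> power_submodule I (Suc (Suc n)) \<subseteq> ideal_smult scale (initial_ideal x i) UNIV"
    using colon \<open>i < s\<close> power_submodule_Suc_subset[of I "Suc n"]
      ideal_smult_mono[of "initial_ideal x i" "initial_ideal x i" "power_submodule I n" UNIV]
    by blast
  then show "?C \<inter> power_submodule I (Suc (Suc n)) \<subseteq> ?R"
    using initial_submodule_inter_power_subset[OF assms(1-3) less_imp_le[OF \<open>i < s\<close>]] by blast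
  have "initial_ideal x i \<subseteq> I"
    using assms(1) initial_ideal_mono[of i s x] \<open>i < s\<close> by auto
  then have "?R \<subseteq> power_submodule I (Suc (Suc n))"
    unfolding power_submodule_Suc[of I "Suc n"] by (rule ideal_smult_mono) simp
  moreover have "?R \<subseteq> ?C"
    using ideal_smult_mono[of "initial_ideal x i" "initial_ideal x i" _ UNIV]
    by (auto simp: mod_colon_def intro: subspace_scale[OF subspace_ideal_smult])
  ultimately show "?R \<subseteq> ?C \<inter> power_submodule I (Suc (Suc n))" by blast
qed

end

theorem proposition3p5:
  fixes sc :: "'a::comm_ring_1 \<Rightarrow> 'b::ab_group_add \<Rightarrow> 'b"
    and I :: "'a set" and x :: "nat \<Rightarrow> 'a" and s l :: nat
  assumes "noetherian_ring TYPE('a)"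
    and "module sc"
    and "fin_gen_module sc"
    and "is_ideal I"
    and "is_reduction sc (ideal_gen (x ` {..<s})) I"
    and "l \<ge> reduction_number sc (ideal_gen (x ` {..<s})) I"
    and "\<forall>i<s. mod_colon sc (ideal_smult sc (ideal_gen (x ` {..<i})) UNIV) (x i)
               \<inter> ideal_smult sc (ideal_pow I (l + 1)) UNIV
             = ideal_smult sc (ideal_gen (x ` {..<i})) (ideal_smult sc (ideal_pow I l) UNIV)"
  shows "\<forall>n\<ge>l + 1. \<forall>i<s. mod_colon sc (ideal_smult sc (ideal_gen (x ` {..<i})) UNIV) (x i)
               \<inter> ideal_smult sc (ideal_pow I n) UNIV
             = ideal_smult sc (ideal_gen (x ` {..<i})) (ideal_smult sc (ideal_pow I (n - 1)) UNIV)"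
proof -
  interpret M: module sc by fact
  let ?J = "initial_ideal x s"
  have J_I: "?J \<subseteq> I" using assms(5) by (simp add: is_reduction_def)
  have reduction: "ideal_smult sc ?J (M.power_submodule I n) = M.power_submodule I (Suc n)"
    if "l \<le> n" for n
    using assms(5) order_trans[OF assms(6) that] by (rule M.reduction_equation_above_reduction_number)
  have "\<forall>i<s. mod_colon sc (ideal_smult sc (initial_ideal x i) UNIV) (x i)
                  \<inter> M.power_submodule I n
                = ideal_smult sc (initial_ideal x i) (M.power_submodule I (n - 1))"
    if "l + 1 \<le> n" for n
    using that
  proof (induction rule: dec_induct)
    case base
    show ?case using assms(7) by simp
  next
    case (step n)
    then obtain m where "n = Suc m" by (cases n) auto
    with step show ?case
      using M.colon_inter_power_submodule_Suc[OF J_I reduction] by simp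
  qed
  then show ?thesis by blast
qed

end
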